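(* Let $\rho$ be a subnormalized state and $\Gamma$ positive semidefinite, let $\mathcal M^\infty$ be as below, $q\ge0$, $\eta\in(0,\operatorname{tr}\rho]$, $g\in(0,1)$. If $\mathcal M^\infty$ is $q$-quasiuniversal with respect to $\Gamma$, then with $\eta_g=(1-g)\eta+g\operatorname{tr}\rho$, $$D^\eta_H(\rho\|\Gamma)\ge D^{\infty,\eta}_H(\rho\|\Gamma)\ge D^{\eta_g}_H(\rho\|\Gamma)-q-\log\frac{\operatorname{tr}\rho}{g\eta}.$$ If $\mathcal M^\infty$ is $q$-quasiuniversal with respect to $\mathbb 1$, then $H^\eta_H(\rho)\le H^{\infty,\eta}_H(\rho)\le H^{\eta_g}_H(\rho)+q+\log\frac{\operatorname{tr}\rho}{g\eta}$.
   Context: Natural logarithms; subnormalized state = positive semidefinite with trace $\le1$; POVM effect = $0\le Q\le\mathbb 1$. $\{\mathcal M^r\}_{r\ge0}$ is a family of sets of POVM effects on the system with $\mathbb 1\in\mathcal M^0$ and $\mathcal M^r\subseteq\mathcal M^{r'}$ for $r\le r'$; $\mathcal M^\infty$ is the topological closure of $\bigcup_{r\ge0}\mathcal M^r$. $D^{\infty,\eta}_H(\rho\|\Gamma)=-\log\inf\{\operatorname{tr}(Q\Gamma)/\operatorname{tr}(Q\rho): Q\in\mathcal M^\infty,\operatorname{tr}(Q\rho)\ge\eta\}$ and $H^{\infty,\eta}_H(\rho)=-D^{\infty,\eta}_H(\rho\|\mathbb 1)$. Hypothesis-testing relative entropy $D^\eta_H(\rho\|\Gamma)=-\log\min\{\operatorname{tr}(Q\Gamma)/\eta: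 0\le Q\le\mathbb 1,\operatorname{tr}(Q\rho)\ge\eta\}$, $H^\eta_H(\rho)=-D^\eta_H(\rho\|\mathbb 1)$. $\mathcal M^\infty$ is $q$-quasiuniversal with respect to $\Gamma$ if for every POVM effect $Q$ with $\|Q\|_\infty=1$ and every $g\in(0,1)$ there exist $\tilde Q,\tilde Q'\in\mathcal M^\infty$ with $g\tilde Q\le Q\le(1-g)\tilde Q'+g\mathbb 1$ and $\log\operatorname{tr}(\tilde Q'\Gamma)-\log\operatorname{tr}(\tilde Q\Gamma)\le q$. *)

theory Defs
  imports "HOL-Analysis.Analysis"
begin

type_synonym 'n cmat = "complex^'n^'n"

definition qform :: "'n::finite cmat \<Rightarrow> complex^'n \<Rightarrow> complex" where
  "qform A v = (\<Sum>i\<in>UNIV. cnj (v $ i) * ((A *v v) $ i))"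

definition cadj :: "'n::finite cmat \<Rightarrow> 'n cmat" where
  "cadj A = (\<chi> i j. cnj (A $ j $ i))"

definition psd :: "'n::finite cmat \<Rightarrow> bool" where
  "psd A \<longleftrightarrow> cadj A = A \<and> (\<forall>v. Im (qform A v) = 0 \<and> 0 \<le> Re (qform A v))"

definition loewner_le :: "'n::finite cmat \<Rightarrow> 'n cmat \<Rightarrow> bool" where
  "loewner_le A B \<longleftrightarrow> psd (B - A)"

definition tr :: "'n::finite cmat \<Rightarrow> real" where
  "tr A = Re (trace A)"

definition subnormalized_state :: "'n::finite cmat \<Rightarrow> bool" where
  "subnormalized_state \<rho> \<longleftrightarrow> psd \<rho> \<and> tr \<rho> \<le> 1"

definition povm_effect :: "'n::finite cmat \<Rightarrow> bool" where
  "povm_effect Q \<longleftrightarrow> loewner_le 0 Q \<and> loewner_le Q (mat 1)"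

definition opnorm :: "'n::finite cmat \<Rightarrow> real" where
  "opnorm Q = onorm (\<lambda>v. Q *v v)"

definition eln :: "real \<Rightarrow> ereal" where
  "eln x = (if 0 < x then ereal (ln x) else -\<infinity>)"

definition Minf :: "(real \<Rightarrow> 'n::finite cmat set) \<Rightarrow> 'n cmat set" where
  "Minf M = closure (\<Union>r\<in>{0..}. M r)"

definition measurement_family :: "(real \<Rightarrow> 'n::finite cmat set) \<Rightarrow> bool" where
  "measurement_family M \<longleftrightarrow>
     (\<forall>r\<ge>0. \<forall>Q\<in>M r. povm_effect Q) \<and> mat 1 \<in> M 0 \<and>
     (\<forall>r r'. 0 \<le> r \<and> r \<le> r' \<longrightarrow> M r \<subseteq> M r')"

definition DinfH :: "(real \<Rightarrow> 'n::finite cmat set) \<Rightarrow> real \<Rightarrow> 'n cmat \<Rightarrow> 'n cmat \<Rightarrow> ereal" where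
  "DinfH M \<eta> \<rho> \<Gamma> =
     - eln (Inf {tr (Q ** \<Gamma>) / tr (Q ** \<rho>) | Q. Q \<in> Minf M \<and> tr (Q ** \<rho>) \<ge> \<eta>})"

definition HinfH :: "(real \<Rightarrow> 'n::finite cmat set) \<Rightarrow> real \<Rightarrow> 'n cmat \<Rightarrow> ereal" where
  "HinfH M \<eta> \<rho> = - DinfH M \<eta> \<rho> (mat 1)"

text \<open>Hypothesis-testing relative entropy (the minimum is written as an infimum).\<close>
definition DH :: "real \<Rightarrow> 'n::finite cmat \<Rightarrow> 'n cmat \<Rightarrow> ereal" where
  "DH \<eta> \<rho> \<Gamma> =
     - eln (Inf {tr (Q ** \<Gamma>) / \<eta> | Q. povm_effect Q \<and> tr (Q ** \<rho>) \<ge> \<eta>})"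

definition HH :: "real \<Rightarrow> 'n::finite cmat \<Rightarrow> ereal" where
  "HH \<eta> \<rho> = - DH \<eta> \<rho> (mat 1)"

text \<open>q-quasiuniversality. The condition log tr(Q'G) - log tr(QG) \<le> q is written
  multiplicatively (exponentiated), which also covers vanishing traces.\<close>
definition quasiuniversal :: "real \<Rightarrow> 'n::finite cmat set \<Rightarrow> 'n cmat \<Rightarrow> bool" where
  "quasiuniversal q MI \<Gamma> \<longleftrightarrow>
     (\<forall>Q g. povm_effect Q \<and> opnorm Q = 1 \<and> 0 < g \<and> g < 1 \<longrightarrow>
        (\<exists>Qt Qt'. Qt \<in> MI \<and> Qt' \<in> MI \<and>
           loewner_le (g *\<^sub>R Qt) Q \<and>
           loewner_le Q ((1 - g) *\<^sub>R Qt' + g *\<^sub>R mat 1) \<and>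
           tr (Qt' ** \<Gamma>) \<le> exp q * tr (Qt ** \<Gamma>)))"

end

theory Submission
  imports Defs
begin

text \<open>If \<open>Q \<in> Minf M\<close> satisfies \<open>tr (Q \<rho>) \<ge> \<eta>\<close>, the rescaled effect \<open>(\<eta> / tr (Q \<rho>)) Q\<close> is admissible
  for the unrestricted test and has the same ratio \<open>tr (Q \<Gamma>) / tr (Q \<rho>)\<close>; this gives
  \<open>DinfH \<le> DH\<close>. Conversely, an effect \<open>Q\<close> admissible for \<open>DH \<eta>\<^sub>g\<close> is normalised to operator
  norm one and sandwiched as \<open>g Q\<^sub>1 \<le> Q / \<parallel>Q\<parallel> \<le> (1 - g) Q\<^sub>2 + g 1\<close> with \<open>Q\<^sub>1, Q\<^sub>2 \<in> Minf M\<close>.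
  Tracing against \<open>\<rho>\<close> gives \<open>tr (Q\<^sub>2 \<rho>) \<ge> \<eta>\<close>, tracing against \<open>\<Gamma>\<close> gives
  \<open>tr (Q\<^sub>2 \<Gamma>) \<le> e\<^sup>q tr (Q\<^sub>1 \<Gamma>) \<le> e\<^sup>q tr (Q \<Gamma>) / (g \<parallel>Q\<parallel>)\<close>, and \<open>\<parallel>Q\<parallel> \<ge> \<eta>\<^sub>g / tr \<rho>\<close>.
  The entropies are the case \<open>\<Gamma> = 1\<close>. The matrix-analytic input is \<open>tr (A B) \<ge> 0\<close> for
  positive semidefinite \<open>A\<close>, \<open>B\<close>, obtained by splitting off rank-one parts of \<open>B\<close> through
  Schur complements.\<close>

section \<open>Hermitian and positive semidefinite matrices\<close>

lemma hermitian_entry: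
  assumes "cadj A = A"
  shows "A $ i $ j = cnj (A $ j $ i)"
  using arg_cong[where f = "\<lambda>B. B $ i $ j", OF assms] by (simp add: cadj_def)

lemma hermitian_diag_real:
  assumes "cadj A = A"
  shows "A $ i $ i = complex_of_real (Re (A $ i $ i))"
  using hermitian_entry[OF assms, of i i] by (metis Reals_cnj_iff complex_is_Real_iff of_real_Re)

lemma inner_complex_vec: "x \<bullet> y = Re (\<Sum>i\<in>UNIV. cnj (x $ i) * y $ i)"
  for x y :: "complex^'n::finite"
  by (simp add: inner_vec_def inner_complex_def)

lemma Re_qform: "Re (qform A v) = v \<bullet> (A *v v)"
  by (simp add: qform_def inner_complex_vec)

lemma matrix_vector_mult_scaleR_right: "A *v (c *\<^sub>R x) = c *\<^sub>R (A *v x)"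
  for A :: "'n::finite cmat"
  by (simp add: linear_scale)

lemma matrix_vector_mult_scaleR_left: "(c *\<^sub>R A) *v x = c *\<^sub>R (A *v x)"
  for A :: "'n::finite cmat"
  by (simp add: vec_eq_iff matrix_vector_mult_def scaleR_conv_of_real[where 'a = complex]
      sum_distrib_left algebra_simps)

lemma hermitian_inner_commute:
  fixes A :: "'n::finite cmat"
  assumes "cadj A = A"
  shows "x \<bullet> (A *v y) = y \<bullet> (A *v x)"
proof -
  have "(\<Sum>i\<in>UNIV. \<Sum>j\<in>UNIV. cnj (x$i) * A$i$j * y$j) =
        cnj (\<Sum>j\<in>UNIV. \<Sum>i\<in>UNIV. cnj (y$j) * A$j$i * x$i)"
    unfolding cnj_sum
    by (subst sum.swap, intro sum.cong refl)
      (subst hermitian_entry[OF assms], simp add: algebra_simps)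
  then show ?thesis
    by (simp only: inner_complex_vec matrix_vector_mult_def vec_lambda_beta sum_distrib_left
        mult.assoc cnj.sel)
qed

lemma hermitian_qform_real:
  fixes A :: "'n::finite cmat"
  assumes "cadj A = A"
  shows "Im (qform A v) = 0"
proof -
  have "cnj (qform A v) = (\<Sum>i\<in>UNIV. \<Sum>j\<in>UNIV. cnj (cnj (v$i) * A$i$j * v$j))"
    by (simp add: qform_def matrix_vector_mult_def sum_distrib_left mult.assoc)
  also have "\<dots> = (\<Sum>j\<in>UNIV. \<Sum>i\<in>UNIV. cnj (v$j) * A$j$i * v$i)"
    by (subst sum.swap, intro sum.cong refl)
      (subst hermitian_entry[OF assms], simp add: algebra_simps)
  also have "\<dots> = qform A v"
    by (simp add: qform_def matrix_vector_mult_def sum_distrib_left mult.assoc)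
  finally show ?thesis by (metis Reals_cnj_iff complex_is_Real_iff)
qed

lemma psd_iff_inner: "psd A \<longleftrightarrow> cadj A = A \<and> (\<forall>v. 0 \<le> v \<bullet> (A *v v))"
  by (auto simp: psd_def hermitian_qform_real Re_qform[symmetric])

lemma cadj_add: "cadj (A + B) = cadj A + cadj B"
  by (simp add: cadj_def vec_eq_iff)

lemma cadj_diff: "cadj (A - B) = cadj A - cadj B"
  by (simp add: cadj_def vec_eq_iff)

lemma cadj_scaleR: "cadj (c *\<^sub>R A) = c *\<^sub>R cadj A"
  by (simp add: cadj_def vec_eq_iff scaleR_conv_of_real[where 'a = complex])

lemma cadj_mat_1: "cadj (mat 1 :: 'n::finite cmat) = mat 1"
  by (simp add: cadj_def vec_eq_iff mat_def)

lemma psd_add: "psd A \<Longrightarrow> psd B \<Longrightarrow> psd (A + B)"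
  by (simp add: psd_iff_inner cadj_add matrix_vector_mult_add_rdistrib inner_add_right)

lemma psd_scaleR: "psd A \<Longrightarrow> 0 \<le> c \<Longrightarrow> psd (c *\<^sub>R A)"
  by (simp add: psd_iff_inner cadj_scaleR matrix_vector_mult_scaleR_left)

lemma psd_mat_1: "psd (mat 1 :: 'n::finite cmat)"
  by (simp add: psd_iff_inner cadj_mat_1)

lemma psd_0: "psd (0 :: 'n::finite cmat)"
  by (simp add: psd_iff_inner cadj_def vec_eq_iff)

lemma psd_cauchy_schwarz:
  fixes A :: "'n::finite cmat"
  assumes "psd A"
  shows "(x \<bullet> (A *v y))\<^sup>2 \<le> (x \<bullet> (A *v x)) * (y \<bullet> (A *v y))"
proof -
  define a b c where "a = x \<bullet> (A *v x)" and "b = x \<bullet> (A *v y)" and "c = y \<bullet> (A *v y)"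
  have herm: "cadj A = A" and nonneg: "\<And>v. 0 \<le> v \<bullet> (A *v v)"
    using assms by (auto simp: psd_iff_inner)
  have quadratic: "0 \<le> a + 2 * t * b + t\<^sup>2 * c" for t
    using nonneg[of "x + t *\<^sub>R y"] hermitian_inner_commute[OF herm, of y x]
    by (simp add: a_def b_def c_def matrix_vector_right_distrib matrix_vector_mult_scaleR_right
        inner_add_left inner_add_right power2_eq_square algebra_simps)
  show ?thesis
  proof (cases "c = 0")
    case True
    have "b = 0"
    proof (rule ccontr)
      assume "b \<noteq> 0"
      then have "a + 2 * (- (a + 1) / (2 * b)) * b = -1" by (simp add: field_simps)
      then show False using quadratic[of "- (a + 1) / (2 * b)"] True by simp
    qed
    then show ?thesis using True by (simp add: b_def c_def)
  next
    case False
    then have "0 < c" using nonneg[of y] by (simp add: c_def)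
    have "0 \<le> a + 2 * (- b / c) * b + (- b / c)\<^sup>2 * c" by (rule quadratic)
    also have "\<dots> = a - b\<^sup>2 / c" using \<open>0 < c\<close> by (simp add: field_simps power2_eq_square)
    finally have "b\<^sup>2 \<le> a * c" using \<open>0 < c\<close> by (simp add: field_simps)
    then show ?thesis by (simp add: a_def b_def c_def)
  qed
qed

lemma matrix_vector_mult_axis: "(A *v axis j c) $ k = A $ k $ j * c"
  for A :: "'n::finite cmat"
  by (simp add: matrix_vector_mult_def axis_def if_distrib cong: if_cong)

lemma inner_axis_complex_vec: "axis j c \<bullet> w = Re (cnj c * w $ j)"
  for w :: "complex^'n::finite"
proof -
  have "(\<Sum>i\<in>UNIV. cnj (axis j c $ i) * w $ i) = (\<Sum>i\<in>UNIV. if i = j then cnj c * w $ j else 0)"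
    by (rule sum.cong) (auto simp: axis_def)
  then show ?thesis by (simp add: inner_complex_vec)
qed

lemma psd_diag_nonneg: "psd A \<Longrightarrow> 0 \<le> Re (A $ i $ i)"
  by (auto simp: psd_iff_inner inner_axis_complex_vec matrix_vector_mult_axis
      dest: spec[of _ "axis i 1"])

lemma psd_column_eq_0:
  fixes A :: "'n::finite cmat"
  assumes "psd A" "A $ j $ j = 0"
  shows "A $ k $ j = 0"
proof -
  define e where "e = (axis j 1 :: complex^'n)"
  have "x \<bullet> (A *v e) = 0" for x
    using psd_cauchy_schwarz[OF assms(1), of x e] assms(2)
    by (simp add: e_def inner_axis_complex_vec matrix_vector_mult_axis)
  then have "A *v e = 0" by (metis inner_eq_zero_iff)
  then show ?thesis using matrix_vector_mult_axis[of A j 1 k] by (simp add: e_def)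
qed

lemma psd_eq_0_if_diag_0:
  fixes A :: "'n::finite cmat"
  assumes "psd A" "\<And>i. A $ i $ i = 0"
  shows "A = 0"
  using psd_column_eq_0[OF assms(1) assms(2)] by (simp add: vec_eq_iff)

text \<open>The vector \<open>axis i \<alpha>\<close>, with the phase \<open>\<alpha>\<close> of \<open>(A *v v) $ i\<close>, makes Cauchy--Schwarz sharp.\<close>
lemma psd_entry_bound:
  fixes A :: "'n::finite cmat"
  assumes "psd A"
  shows "(cmod ((A *v v) $ i))\<^sup>2 \<le> (v \<bullet> (A *v v)) * Re (A $ i $ i)"
proof (cases "(A *v v) $ i = 0")
  case True
  then show ?thesis
    using assms psd_diag_nonneg[OF assms, of i] by (simp add: psd_iff_inner)
next
  case False
  define s where "s = (A *v v) $ i"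
  define \<alpha> where "\<alpha> = s / complex_of_real (cmod s)"
  have sp: "0 < cmod s" using False by (simp add: s_def)
  have herm: "cadj A = A" using assms by (simp add: psd_iff_inner)
  have "\<alpha> * cnj s = complex_of_real (cmod s)"
    using sp complex_norm_square[of s] by (simp add: \<alpha>_def power2_eq_square field_simps)
  moreover have "(\<Sum>k\<in>UNIV. cnj (v $ k) * (A $ k $ i * \<alpha>)) = \<alpha> * cnj s"
    unfolding s_def matrix_vector_mult_def vec_lambda_beta cnj_sum sum_distrib_left
    by (intro sum.cong refl) (subst hermitian_entry[OF herm], simp)
  ultimately have v_side: "v \<bullet> (A *v axis i \<alpha>) = cmod s"
    by (simp add: inner_complex_vec matrix_vector_mult_axis)
  have "axis i \<alpha> \<bullet> (A *v axis i \<alpha>) = Re (cnj \<alpha> * (A $ i $ i * \<alpha>))"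
    by (simp add: inner_axis_complex_vec matrix_vector_mult_axis)
  also have "cnj \<alpha> * (A $ i $ i * \<alpha>) = A $ i $ i * (\<alpha> * cnj \<alpha>)" by simp
  also have "\<dots> = complex_of_real (Re (A $ i $ i) * (cmod \<alpha>)\<^sup>2)"
    by (subst hermitian_diag_real[OF herm]) (simp only: complex_norm_square of_real_mult)
  also have "Re \<dots> = Re (A $ i $ i)"
    using sp by (simp add: \<alpha>_def norm_divide)
  finally show ?thesis
    using psd_cauchy_schwarz[OF assms, of v "axis i \<alpha>"] v_side by (simp add: s_def)
qed

section \<open>Nonnegativity of the trace of a product of positive matrices\<close>

lemma trace_matrix_mult: "trace (A ** B) = (\<Sum>i\<in>UNIV. \<Sum>k\<in>UNIV. A $ i $ k * B $ k $ i)"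
  by (simp add: trace_def matrix_matrix_mult_def)

definition schur_complement :: "'n::finite cmat \<Rightarrow> 'n \<Rightarrow> 'n cmat" where
  "schur_complement B i = (\<chi> j k. B $ j $ k - B $ j $ i * B $ i $ k / B $ i $ i)"

lemma trace_mult_schur_complement:
  fixes A B :: "'n::finite cmat"
  assumes "cadj B = B"
  shows "trace (A ** B) = trace (A ** schur_complement B i) + qform A (column i B) / B $ i $ i"
proof -
  have "trace (A ** B) - trace (A ** schur_complement B i) =
      (\<Sum>j\<in>UNIV. \<Sum>k\<in>UNIV. A $ j $ k * (B $ k $ i * B $ i $ j) / B $ i $ i)"
    by (simp add: trace_matrix_mult schur_complement_def sum_subtractf[symmetric] algebra_simps)
  also have "\<dots> = (\<Sum>j\<in>UNIV. \<Sum>k\<in>UNIV. cnj (B $ j $ i) * (A $ j $ k * B $ k $ i) / B $ i $ i)"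
    by (intro sum.cong refl) (subst (2) hermitian_entry[OF assms], simp)
  also have "\<dots> = qform A (column i B) / B $ i $ i"
    by (simp add: qform_def column_def matrix_vector_mult_def sum_divide_distrib
        sum_distrib_left)
  finally show ?thesis by (simp add: algebra_simps)
qed

lemma qform_schur_complement:
  fixes B :: "'n::finite cmat"
  assumes "cadj B = B"
  shows "qform (schur_complement B i) w =
    qform B w - cnj ((B *v w) $ i) * (B *v w) $ i / B $ i $ i"
proof -
  have "qform B w - qform (schur_complement B i) w =
      (\<Sum>j\<in>UNIV. \<Sum>k\<in>UNIV. cnj (w $ j) * (B $ j $ i * B $ i $ k * w $ k) / B $ i $ i)"
    by (simp add: qform_def matrix_vector_mult_def schur_complement_def sum_subtractf[symmetric]
        sum_distrib_left algebra_simps)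
  also have "\<dots> = (\<Sum>j\<in>UNIV. \<Sum>k\<in>UNIV.
      cnj (B $ i $ j * w $ j) * (B $ i $ k * w $ k) / B $ i $ i)"
    by (intro sum.cong refl) (subst hermitian_entry[OF assms], simp add: algebra_simps)
  also have "\<dots> = cnj ((B *v w) $ i) * (B *v w) $ i / B $ i $ i"
    by (simp add: matrix_vector_mult_def cnj_sum sum_distrib_left sum_distrib_right
        sum_divide_distrib, subst sum.swap, rule refl)
  finally show ?thesis by (simp add: algebra_simps)
qed

lemma psd_schur_complement:
  fixes B :: "'n::finite cmat"
  assumes "psd B" "B $ i $ i \<noteq> 0"
  shows "psd (schur_complement B i)"
  unfolding psd_iff_inner
proof (intro conjI allI)
  have herm: "cadj B = B" using assms(1) by (simp add: psd_iff_inner)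
  define d where "d = Re (B $ i $ i)"
  have Bii: "B $ i $ i = complex_of_real d"
    unfolding d_def by (rule hermitian_diag_real[OF herm])
  have "0 \<le> d" unfolding d_def by (rule psd_diag_nonneg[OF assms(1)])
  moreover have "d \<noteq> 0" using assms(2) Bii by auto
  ultimately have "0 < d" by simp
  have "cnj (B $ k $ j - B $ k $ i * B $ i $ j / B $ i $ i) =
      B $ j $ k - B $ j $ i * B $ i $ k / B $ i $ i" for j k
    unfolding Bii hermitian_entry[OF herm, of k j] hermitian_entry[OF herm, of k i]
      hermitian_entry[OF herm, of i j]
    by (simp add: mult.commute)
  then show "cadj (schur_complement B i) = schur_complement B i"
    by (simp add: cadj_def schur_complement_def vec_eq_iff)
  fix w
  define s where "s = (B *v w) $ i"
  have "w \<bullet> (schur_complement B i *v w) = w \<bullet> (B *v w) - (cmod s)\<^sup>2 / d"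
    using qform_schur_complement[OF herm, of i w] cmod_power2[of s]
    by (simp add: Re_qform[symmetric] Bii s_def complex_norm_square Re_divide_of_real
        power2_eq_square mult.commute)
  moreover have "(cmod s)\<^sup>2 \<le> (w \<bullet> (B *v w)) * d"
    using psd_entry_bound[OF assms(1), of w i] by (simp add: s_def d_def)
  ultimately have "0 \<le> d * (w \<bullet> (schur_complement B i *v w))"
    using \<open>0 < d\<close> by (simp add: field_simps)
  then show "0 \<le> w \<bullet> (schur_complement B i *v w)"
    using \<open>0 < d\<close> by (simp add: zero_le_mult_iff)
qed

lemma schur_complement_diag_support:
  fixes B :: "'n::finite cmat"
  assumes "psd B"
  shows "{j. schur_complement B i $ j $ j \<noteq> 0} \<subseteq> {j. B $ j $ j \<noteq> 0} - {i}"
  using psd_column_eq_0[OF assms, of _ i] by (auto simp: schur_complement_def)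

text \<open>Induction on the number of nonzero diagonal entries of \<open>B\<close>: splitting off the rank-one
  part of \<open>B\<close> through a nonzero diagonal entry leaves a positive Schur complement.\<close>
lemma psd_trace_mult_nonneg:
  fixes A B :: "'n::finite cmat"
  assumes "psd A" "psd B"
  shows "0 \<le> tr (A ** B)"
proof -
  have "0 \<le> Re (trace (A ** B))" if "psd B" "card {i. B $ i $ i \<noteq> 0} = n" for n B
    using that
  proof (induction n arbitrary: B rule: less_induct)
    case (less n B)
    show ?case
    proof (cases "\<forall>i. B $ i $ i = 0")
      case True
      then show ?thesis using psd_eq_0_if_diag_0[OF less.prems(1)] by (simp add: trace_def)
    next
      case False
      then obtain i where i: "B $ i $ i \<noteq> 0" by blast
      have herm: "cadj B = B" using less.prems(1) by (simp add: psd_iff_inner)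
      have "{j. schur_complement B i $ j $ j \<noteq> 0} \<subset> {j. B $ j $ j \<noteq> 0}"
        using schur_complement_diag_support[OF less.prems(1), of i] i by blast
      then have "card {j. schur_complement B i $ j $ j \<noteq> 0} < n"
        using less.prems(2) psubset_card_mono[of "{j. B $ j $ j \<noteq> 0}"] by simp
      then have "0 \<le> Re (trace (A ** schur_complement B i))"
        using less.IH psd_schur_complement[OF less.prems(1) i] by blast
      moreover have "0 \<le> Re (qform A (column i B) / B $ i $ i)"
        using assms(1) psd_diag_nonneg[OF less.prems(1), of i]
        by (subst hermitian_diag_real[OF herm])
          (simp add: Re_qform psd_iff_inner Re_divide_of_real)
      ultimately show ?thesis using trace_mult_schur_complement[OF herm, of A i] by simp
    qed
  qed
  then show ?thesis using assms(2) by (simp add: tr_def)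
qed

section \<open>Effects, the operator norm and the closure \<open>Minf M\<close>\<close>

lemma tr_mult_add_left: "tr ((X + Y) ** G) = tr (X ** G) + tr (Y ** G)"
  for X :: "'n::finite cmat"
  by (simp add: tr_def trace_matrix_mult algebra_simps sum.distrib)

lemma tr_mult_diff_left: "tr ((X - Y) ** G) = tr (X ** G) - tr (Y ** G)"
  for X :: "'n::finite cmat"
  by (simp add: tr_def trace_matrix_mult algebra_simps sum_subtractf)

lemma tr_mult_scaleR_left: "tr ((c *\<^sub>R X) ** G) = c * tr (X ** G)"
  for X :: "'n::finite cmat"
proof -
  have "trace ((c *\<^sub>R X) ** G) = complex_of_real c * trace (X ** G)"
    by (simp add: trace_matrix_mult scaleR_conv_of_real[where 'a = complex]
        sum_distrib_left mult.assoc)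
  then show ?thesis by (simp add: tr_def)
qed

lemma tr_mult_mat_1_left: "tr (mat 1 ** G) = tr G"
  for G :: "'n::finite cmat"
  by (simp add: matrix_mul_lid)

lemma loewner_le_tr_mult: "loewner_le X Y \<Longrightarrow> psd G \<Longrightarrow> tr (X ** G) \<le> tr (Y ** G)"
  for X :: "'n::finite cmat"
  using psd_trace_mult_nonneg[of "Y - X" G] by (simp add: loewner_le_def tr_mult_diff_left)

lemma povm_effect_iff: "povm_effect Q \<longleftrightarrow> psd Q \<and> psd (mat 1 - Q)"
  by (simp add: povm_effect_def loewner_le_def)

lemma opnorm_povm_effect_le_1:
  fixes Q :: "'n::finite cmat"
  assumes "povm_effect Q"
  shows "opnorm Q \<le> 1"
  unfolding opnorm_def
proof (rule onorm_le)
  fix v :: "complex^'n"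
  have Q: "psd Q" "psd (mat 1 - Q)" using assms by (auto simp: povm_effect_iff)
  have le: "x \<bullet> (Q *v x) \<le> x \<bullet> x" for x
    using Q(2) by (simp add: psd_iff_inner matrix_vector_mult_diff_rdistrib inner_diff_right)
  have ge: "0 \<le> x \<bullet> (Q *v x)" for x
    using Q(1) by (simp add: psd_iff_inner)
  define u where "u = Q *v v"
  have "(u \<bullet> (Q *v v))\<^sup>2 \<le> (u \<bullet> (Q *v u)) * (v \<bullet> (Q *v v))"
    by (rule psd_cauchy_schwarz[OF Q(1)])
  also have "\<dots> \<le> (u \<bullet> u) * (v \<bullet> v)"
    by (intro mult_mono le ge) simp
  finally have sq: "(norm u)\<^sup>2 * (norm u)\<^sup>2 \<le> (norm u)\<^sup>2 * (norm v)\<^sup>2"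
    by (simp add: u_def dot_square_norm power2_eq_square)
  have "(norm u)\<^sup>2 \<le> (norm v)\<^sup>2"
  proof (cases "u = 0")
    case False
    then have "0 < (norm u)\<^sup>2" by simp
    then show ?thesis using sq mult_le_cancel_left_pos by blast
  qed simp
  then have "norm u \<le> norm v" by (rule power2_le_imp_le) simp
  then show "norm (Q *v v) \<le> 1 * norm v" by (simp add: u_def)
qed

lemma loewner_le_opnorm:
  fixes Q :: "'n::finite cmat"
  assumes "psd Q"
  shows "loewner_le Q (opnorm Q *\<^sub>R mat 1)"
proof -
  have "0 \<le> v \<bullet> ((opnorm Q *\<^sub>R mat 1 - Q) *v v)" for v
  proof -
    have "v \<bullet> (Q *v v) \<le> norm v * norm (Q *v v)" by (rule norm_cauchy_schwarz)
    also have "\<dots> \<le> norm v * (opnorm Q * norm v)"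
      using onorm[of "(*v) Q" v] by (simp add: opnorm_def mult_left_mono)
    finally show ?thesis
      by (simp add: matrix_vector_mult_diff_rdistrib inner_diff_right
          matrix_vector_mult_scaleR_left power2_norm_eq_inner[symmetric] power2_eq_square
          algebra_simps)
  qed
  then show ?thesis using assms
    by (simp add: loewner_le_def psd_iff_inner cadj_diff cadj_scaleR cadj_mat_1)
qed

lemma tr_mult_le_opnorm: "psd Q \<Longrightarrow> psd \<rho> \<Longrightarrow> tr (Q ** \<rho>) \<le> opnorm Q * tr \<rho>"
  for Q :: "'n::finite cmat"
  using loewner_le_tr_mult[OF loewner_le_opnorm] by (simp add: tr_mult_scaleR_left tr_mult_mat_1_left)

lemma tr_nonneg: "psd A \<Longrightarrow> 0 \<le> tr A"
  for A :: "'n::finite cmat"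
  using psd_trace_mult_nonneg[OF psd_mat_1] by (simp add: tr_mult_mat_1_left)

lemma opnorm_scaleR: "opnorm (c *\<^sub>R Q) = \<bar>c\<bar> * opnorm Q"
  for Q :: "'n::finite cmat"
  using onorm_scaleR[of "(*v) Q" c] by (simp add: opnorm_def matrix_vector_mult_scaleR_left)

lemma closed_psd: "closed {Q :: 'n::finite cmat. psd Q}"
proof -
  have "linear (cadj :: 'n cmat \<Rightarrow> 'n cmat)"
    by (rule linearI) (simp_all add: cadj_add cadj_scaleR)
  then have cadj: "continuous_on UNIV (cadj :: 'n cmat \<Rightarrow> 'n cmat)"
    by (simp add: linear_continuous_on linear_conv_bounded_linear)
  have "linear (\<lambda>Q :: 'n cmat. Q *v v)" for v
    by (rule linearI) (simp_all add: matrix_vector_mult_add_rdistrib matrix_vector_mult_scaleR_left)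
  then have form: "continuous_on UNIV (\<lambda>Q :: 'n cmat. v \<bullet> (Q *v v))" for v
    by (intro continuous_intros) (simp add: linear_continuous_on linear_conv_bounded_linear)
  have "{Q :: 'n cmat. psd Q} = {Q. cadj Q = Q} \<inter> {Q. \<forall>v. 0 \<le> v \<bullet> (Q *v v)}"
    by (auto simp: psd_iff_inner)
  also have "closed \<dots>"
    by (intro closed_Int closed_Collect_eq closed_Collect_all closed_Collect_le cadj form
        continuous_on_id continuous_on_const)
  finally show ?thesis .
qed

lemma closed_povm_effect: "closed {Q :: 'n::finite cmat. povm_effect Q}"
proof -
  have "{Q :: 'n cmat. povm_effect Q} = {Q. psd Q} \<inter> (\<lambda>Q. mat 1 - Q) -` {Q. psd Q}"
    by (auto simp: povm_effect_iff)
  also have "closed \<dots>"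
    by (intro closed_Int closed_psd closed_vimage continuous_intros)
  finally show ?thesis .
qed

lemma povm_effect_Minf:
  assumes "measurement_family M" "Q \<in> Minf M"
  shows "povm_effect Q"
proof -
  have "(\<Union>r\<in>{0..}. M r) \<subseteq> {Q. povm_effect Q}"
    using assms(1) by (auto simp: measurement_family_def)
  then have "Minf M \<subseteq> {Q. povm_effect Q}"
    unfolding Minf_def using closed_povm_effect by (rule closure_minimal)
  then show ?thesis using assms(2) by blast
qed

lemma mat_1_in_Minf:
  assumes "measurement_family M"
  shows "mat 1 \<in> Minf M"
  using assms closure_subset unfolding measurement_family_def Minf_def by fastforce

section \<open>Comparing the two hypothesis-testing quantities\<close>

lemma eln_mono: "x \<le> y \<Longrightarrow> eln x \<le> eln y"
  by (auto simp: eln_def)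

lemma eln_mult: "0 < c \<Longrightarrow> eln (c * x) = ereal (ln c) + eln x"
  by (auto simp: eln_def ln_mult zero_less_mult_iff)

lemma cInf_le_mult_cInf:
  fixes A B :: "real set"
  assumes "A \<noteq> {}" "bdd_below B" "0 < c" "\<And>a. a \<in> A \<Longrightarrow> \<exists>b\<in>B. b \<le> c * a"
  shows "Inf B \<le> c * Inf A"
proof -
  have "Inf B / c \<le> Inf A"
  proof (rule cInf_greatest[OF assms(1)])
    fix a assume "a \<in> A"
    then obtain b where "b \<in> B" "b \<le> c * a" using assms(4) by blast
    then have "Inf B \<le> c * a" using cInf_lower[OF _ assms(2)] by fastforce
    then show "Inf B / c \<le> a" using assms(3) by (simp add: divide_le_eq mult.commute)
  qed
  then show ?thesis using assms(3) by (simp add: divide_le_eq mult.commute)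
qed

lemma ereal_minus_le_imp_uminus_le:
  fixes a b :: ereal
  assumes "b - ereal c - ereal d \<le> a"
  shows "- a \<le> - b + ereal c + ereal d"
  using assms by (cases a; cases b) auto

lemma DinfH_le_DH:
  fixes \<rho> \<Gamma> :: "'n::finite cmat"
  assumes "psd \<Gamma>" "measurement_family M" "0 < \<eta>" "\<eta> \<le> tr \<rho>"
  shows "DinfH M \<eta> \<rho> \<Gamma> \<le> DH \<eta> \<rho> \<Gamma>"
proof -
  define SA where "SA = {tr (Q ** \<Gamma>) / \<eta> | Q. povm_effect Q \<and> tr (Q ** \<rho>) \<ge> \<eta>}"
  define SB where
    "SB = {tr (Q ** \<Gamma>) / tr (Q ** \<rho>) | Q. Q \<in> Minf M \<and> tr (Q ** \<rho>) \<ge> \<eta>}"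
  have "Inf SA \<le> Inf SB"
  proof (rule cInf_mono)
    show "SB \<noteq> {}"
      using mat_1_in_Minf[OF assms(2)] assms(4) by (auto simp: SB_def tr_mult_mat_1_left)
    show "bdd_below SA"
      using assms(1,3) psd_trace_mult_nonneg[of _ \<Gamma>]
      by (intro bdd_belowI[of _ 0]) (force simp: SA_def povm_effect_iff)
    fix b assume "b \<in> SB"
    then obtain Q where Q: "Q \<in> Minf M" "\<eta> \<le> tr (Q ** \<rho>)"
      and b: "b = tr (Q ** \<Gamma>) / tr (Q ** \<rho>)"
      by (auto simp: SB_def)
    define t where "t = tr (Q ** \<rho>)"
    have "0 < t" "\<eta> / t \<le> 1" using Q(2) assms(3) by (simp_all add: t_def)
    have Q_psd: "psd Q" "psd (mat 1 - Q)"
      using povm_effect_Minf[OF assms(2) Q(1)] by (auto simp: povm_effect_iff)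
    txt \<open>Shrinking \<open>Q\<close> to \<open>(\<eta> / t) Q\<close> keeps the ratio and makes the constraint tight.\<close>
    have "mat 1 - (\<eta> / t) *\<^sub>R Q = (mat 1 - Q) + (1 - \<eta> / t) *\<^sub>R Q"
      by (simp add: algebra_simps)
    also have "psd \<dots>"
      using Q_psd \<open>\<eta> / t \<le> 1\<close> by (simp add: psd_add psd_scaleR)
    finally have "psd (mat 1 - (\<eta> / t) *\<^sub>R Q)" .
    then have "povm_effect ((\<eta> / t) *\<^sub>R Q)"
      using Q_psd \<open>0 < t\<close> assms(3) by (simp add: povm_effect_iff psd_scaleR)
    moreover have "tr (((\<eta> / t) *\<^sub>R Q) ** \<rho>) = \<eta>"
      using \<open>0 < t\<close> by (simp add: tr_mult_scaleR_left t_def)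
    moreover have "tr (((\<eta> / t) *\<^sub>R Q) ** \<Gamma>) / \<eta> = b"
      using \<open>0 < t\<close> assms(3) by (simp add: tr_mult_scaleR_left b t_def)
    ultimately have "b \<in> SA" unfolding SA_def by (metis (mono_tags, lifting) mem_Collect_eq order_refl)
    then show "\<exists>a\<in>SA. a \<le> b" by blast
  qed
  then show ?thesis
    unfolding DinfH_def DH_def SA_def[symmetric] SB_def[symmetric] by (simp add: eln_mono)
qed

lemma povm_effect_normalize:
  fixes Q :: "'n::finite cmat"
  assumes "povm_effect Q" "0 < opnorm Q"
  shows "povm_effect ((1 / opnorm Q) *\<^sub>R Q)" "opnorm ((1 / opnorm Q) *\<^sub>R Q) = 1"
proof -
  have Q: "psd Q" using assms(1) by (simp add: povm_effect_iff)
  have "mat 1 - (1 / opnorm Q) *\<^sub>R Q = (1 / opnorm Q) *\<^sub>R (opnorm Q *\<^sub>R mat 1 - Q)"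
    using assms(2) by (simp add: scaleR_diff_right)
  also have "psd \<dots>"
    using loewner_le_opnorm[OF Q] assms(2) by (simp add: loewner_le_def psd_scaleR)
  finally show "povm_effect ((1 / opnorm Q) *\<^sub>R Q)"
    using Q assms(2) by (simp add: povm_effect_iff psd_scaleR)
  show "opnorm ((1 / opnorm Q) *\<^sub>R Q) = 1"
    using assms(2) by (simp add: opnorm_scaleR)
qed

lemma quasiuniversal_effect_bound:
  fixes \<rho> \<Gamma> Q :: "'n::finite cmat"
  assumes "psd \<rho>" "psd \<Gamma>" "measurement_family M" "quasiuniversal q (Minf M) \<Gamma>"
    and "0 < \<eta>" "0 < g" "g < 1"
    and "povm_effect Q" "(1 - g) * \<eta> + g * tr \<rho> \<le> tr (Q ** \<rho>)"
  shows "\<exists>Q'\<in>Minf M. \<eta> \<le> tr (Q' ** \<rho>) \<and> tr (Q' ** \<Gamma>) / tr (Q' ** \<rho>) \<le>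
           exp q * (tr \<rho> / (g * \<eta>)) * (tr (Q ** \<Gamma>) / ((1 - g) * \<eta> + g * tr \<rho>))"
proof -
  define \<eta>\<^sub>g where "\<eta>\<^sub>g = (1 - g) * \<eta> + g * tr \<rho>"
  define c where "c = opnorm Q"
  have Q: "psd Q" using assms(8) by (simp add: povm_effect_iff)
  have "0 < \<eta>\<^sub>g"
    unfolding \<eta>\<^sub>g_def using assms(5-7) tr_nonneg[OF assms(1)] by (intro add_pos_nonneg) simp_all
  have \<eta>\<^sub>g_le: "\<eta>\<^sub>g \<le> c * tr \<rho>"
    using assms(9) tr_mult_le_opnorm[OF Q assms(1)] by (simp add: \<eta>\<^sub>g_def c_def)
  then have "0 < c"
    using \<open>0 < \<eta>\<^sub>g\<close> tr_nonneg[OF assms(1)] by (smt (verit) mult_nonpos_nonneg)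
  have "c \<le> 1" unfolding c_def by (rule opnorm_povm_effect_le_1[OF assms(8)])
  obtain Qt Qt' where Qt: "Qt \<in> Minf M" "Qt' \<in> Minf M"
    and below: "loewner_le (g *\<^sub>R Qt) ((1 / c) *\<^sub>R Q)"
    and above: "loewner_le ((1 / c) *\<^sub>R Q) ((1 - g) *\<^sub>R Qt' + g *\<^sub>R mat 1)"
    and ratio: "tr (Qt' ** \<Gamma>) \<le> exp q * tr (Qt ** \<Gamma>)"
    using assms(4,6,7) povm_effect_normalize[OF assms(8)] \<open>0 < c\<close>
    unfolding quasiuniversal_def c_def by blast
  have "\<eta>\<^sub>g \<le> tr (Q ** \<rho>)" using assms(9) by (simp add: \<eta>\<^sub>g_def)
  also have "\<dots> \<le> tr (Q ** \<rho>) / c"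
    using \<open>0 < c\<close> \<open>c \<le> 1\<close> psd_trace_mult_nonneg[OF Q assms(1)]
    by (simp add: le_divide_eq mult_left_le)
  also have "\<dots> \<le> (1 - g) * tr (Qt' ** \<rho>) + g * tr \<rho>"
    using loewner_le_tr_mult[OF above assms(1)]
    by (simp add: tr_mult_add_left tr_mult_scaleR_left tr_mult_mat_1_left)
  finally have "\<eta> \<le> tr (Qt' ** \<rho>)" using assms(7) by (simp add: \<eta>\<^sub>g_def)
  have "g * tr (Qt ** \<Gamma>) \<le> tr (Q ** \<Gamma>) / c"
    using loewner_le_tr_mult[OF below assms(2)] by (simp add: tr_mult_scaleR_left)
  then have Qt_\<Gamma>: "tr (Qt ** \<Gamma>) \<le> tr (Q ** \<Gamma>) / (c * g)"
    using assms(6) \<open>0 < c\<close> by (simp add: field_simps)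
  have "0 \<le> tr (Qt' ** \<Gamma>)" "0 \<le> tr (Q ** \<Gamma>)"
    using psd_trace_mult_nonneg povm_effect_Minf[OF assms(3) Qt(2)] Q assms(2)
    by (auto simp: povm_effect_iff)
  have "tr (Qt' ** \<Gamma>) / tr (Qt' ** \<rho>) \<le> tr (Qt' ** \<Gamma>) / \<eta>"
    using \<open>0 \<le> tr (Qt' ** \<Gamma>)\<close> \<open>\<eta> \<le> tr (Qt' ** \<rho>)\<close> assms(5) by (intro divide_left_mono) simp_all
  also have "\<dots> \<le> exp q * (tr (Q ** \<Gamma>) / (c * g)) / \<eta>"
    using ratio Qt_\<Gamma> assms(5) by (intro divide_right_mono order.trans[OF ratio] mult_left_mono) simp_all
  also have "\<dots> = exp q / (g * \<eta>) * (tr (Q ** \<Gamma>) * (1 / c))" by simp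
  also have "\<dots> \<le> exp q / (g * \<eta>) * (tr (Q ** \<Gamma>) * (tr \<rho> / \<eta>\<^sub>g))"
    using \<eta>\<^sub>g_le \<open>0 < c\<close> \<open>0 < \<eta>\<^sub>g\<close> \<open>0 \<le> tr (Q ** \<Gamma>)\<close> assms(5,6)
    by (intro mult_left_mono) (simp_all add: field_simps)
  also have "\<dots> = exp q * (tr \<rho> / (g * \<eta>)) * (tr (Q ** \<Gamma>) / \<eta>\<^sub>g)"
    by simp
  finally show ?thesis
    using Qt(2) \<open>\<eta> \<le> tr (Qt' ** \<rho>)\<close> unfolding \<eta>\<^sub>g_def by blast
qed

lemma DH_minus_le_DinfH:
  fixes \<rho> \<Gamma> :: "'n::finite cmat"
  assumes "psd \<rho>" "psd \<Gamma>" "measurement_family M" "quasiuniversal q (Minf M) \<Gamma>"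
    and "0 < \<eta>" "\<eta> \<le> tr \<rho>" "0 < g" "g < 1"
  shows "DH ((1 - g) * \<eta> + g * tr \<rho>) \<rho> \<Gamma> - ereal q - ereal (ln (tr \<rho> / (g * \<eta>)))
    \<le> DinfH M \<eta> \<rho> \<Gamma>"
proof -
  define \<eta>\<^sub>g where "\<eta>\<^sub>g = (1 - g) * \<eta> + g * tr \<rho>"
  define K where "K = exp q * (tr \<rho> / (g * \<eta>))"
  define SA where "SA = {tr (Q ** \<Gamma>) / \<eta>\<^sub>g | Q. povm_effect Q \<and> tr (Q ** \<rho>) \<ge> \<eta>\<^sub>g}"
  define SB where
    "SB = {tr (Q ** \<Gamma>) / tr (Q ** \<rho>) | Q. Q \<in> Minf M \<and> tr (Q ** \<rho>) \<ge> \<eta>}"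
  have "0 < K" using assms(5-7) by (simp add: K_def)
  have "Inf SB \<le> K * Inf SA"
  proof (rule cInf_le_mult_cInf)
    have "\<eta>\<^sub>g \<le> tr \<rho>"
      using assms(6,8) mult_left_mono[OF assms(6), of "1 - g"] by (simp add: \<eta>\<^sub>g_def algebra_simps)
    moreover have "povm_effect (mat 1 :: 'n cmat)"
      by (simp add: povm_effect_iff psd_mat_1 psd_0)
    ultimately show "SA \<noteq> {}"
      unfolding SA_def by (metis (mono_tags, lifting) empty_Collect_eq tr_mult_mat_1_left)
    show "bdd_below SB"
      using assms(2,5) psd_trace_mult_nonneg[of _ \<Gamma>] povm_effect_Minf[OF assms(3)]
      by (intro bdd_belowI[of _ 0]) (force simp: SB_def povm_effect_iff)
    show "0 < K" by fact
    fix a assume "a \<in> SA"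
    then obtain Q where "povm_effect Q" "\<eta>\<^sub>g \<le> tr (Q ** \<rho>)" "a = tr (Q ** \<Gamma>) / \<eta>\<^sub>g"
      by (auto simp: SA_def)
    with quasiuniversal_effect_bound[OF assms(1-5,7,8)] show "\<exists>b\<in>SB. b \<le> K * a"
      unfolding SB_def K_def \<eta>\<^sub>g_def by fastforce
  qed
  then have "eln (Inf SB) \<le> ereal (ln K) + eln (Inf SA)"
    using eln_mono eln_mult[OF \<open>0 < K\<close>] by metis
  moreover have "ln K = q + ln (tr \<rho> / (g * \<eta>))"
    using assms(5-7) unfolding K_def by (subst ln_mult) simp_all
  ultimately show ?thesis
    by (auto simp: DinfH_def DH_def SA_def SB_def \<eta>\<^sub>g_def eln_def split: if_splits)
qed

theorem theoremI3:
  fixes \<rho> \<Gamma> :: "'n::finite cmat"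
    and M :: "real \<Rightarrow> 'n cmat set"
    and q \<eta> g :: real
  assumes "subnormalized_state \<rho>"
    and "psd \<Gamma>"
    and "measurement_family M"
    and "0 \<le> q"
    and "0 < \<eta>" and "\<eta> \<le> tr \<rho>"
    and "0 < g" and "g < 1"
  shows "(quasiuniversal q (Minf M) \<Gamma> \<longrightarrow>
            DH \<eta> \<rho> \<Gamma> \<ge> DinfH M \<eta> \<rho> \<Gamma> \<and>
            DinfH M \<eta> \<rho> \<Gamma> \<ge> DH ((1 - g) * \<eta> + g * tr \<rho>) \<rho> \<Gamma>
                 - ereal q - ereal (ln (tr \<rho> / (g * \<eta>))))
       \<and> (quasiuniversal q (Minf M) (mat 1) \<longrightarrow>
            HH \<eta> \<rho> \<le> HinfH M \<eta> \<rho> \<and>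
            HinfH M \<eta> \<rho> \<le> HH ((1 - g) * \<eta> + g * tr \<rho>) \<rho>
                 + ereal q + ereal (ln (tr \<rho> / (g * \<eta>))))"
proof -
  have \<rho>: "psd \<rho>" using assms(1) by (simp add: subnormalized_state_def)
  show ?thesis
    unfolding HH_def HinfH_def
    using DinfH_le_DH[OF assms(2,3,5,6)] DinfH_le_DH[OF psd_mat_1 assms(3,5,6)]
      DH_minus_le_DinfH[OF \<rho> assms(2,3) _ assms(5-8)]
      DH_minus_le_DinfH[OF \<rho> psd_mat_1 assms(3) _ assms(5-8)]
    by (auto intro: ereal_minus_le_imp_uminus_le)
qed

end
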